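(* Let $u\in A$ be a minimiser of $\mathcal M$ on $A$. Then $u$ is also a minimiser of $\mathcal L$ on $A$.
   Context: Let $\Omega\subset\mathbb{R}^n$, $p_0,p_1\in\Omega$, and $A=\{u\in H^1([0,1],\Omega): u(0)=p_0,\ u(1)=p_1\}$. Let $V:\Omega\to\mathbb{R}$ be continuous and strictly positive. $\mathcal M(u)=\frac12\int_0^1|\dot u(t)|^2dt\int_0^1V(u(t))\,dt$ and $\mathcal L(u)=\int_0^1|\dot u(t)|\sqrt{V(u(t))}\,dt$. *)

theory Defs
  imports "HOL-Analysis.Analysis"
begin

text \<open>H^1([0,1], R^n) is realised as the space of absolutely continuous curves with
square-integrable derivative: u is in H^1 with weak derivative g iff g is square
integrable on [0,1] and u(t) = u(0) + int_0^t g for all t in [0,1].\<close>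

definition H1_weak_deriv :: "(real \<Rightarrow> real ^ 'n) \<Rightarrow> (real \<Rightarrow> real ^ 'n) \<Rightarrow> bool" where
  "H1_weak_deriv u g \<longleftrightarrow>
     g absolutely_integrable_on {0..1} \<and>
     (\<lambda>t. (norm (g t))\<^sup>2) integrable_on {0..1} \<and>
     (\<forall>t\<in>{0..1}. u t = u 0 + integral {0..t} g)"

definition H1 :: "(real \<Rightarrow> real ^ 'n) \<Rightarrow> bool" where
  "H1 u \<longleftrightarrow> (\<exists>g. H1_weak_deriv u g)"

text \<open>The (weak) derivative; it is unique almost everywhere, which is all the integrals see.\<close>
definition wderiv :: "(real \<Rightarrow> real ^ 'n) \<Rightarrow> real \<Rightarrow> real ^ 'n" where
  "wderiv u = (SOME g. H1_weak_deriv u g)"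

definition admissible :: "(real ^ 'n) set \<Rightarrow> real ^ 'n \<Rightarrow> real ^ 'n \<Rightarrow> (real \<Rightarrow> real ^ 'n) set" where
  "admissible \<Omega> p0 p1 = {u. H1 u \<and> (\<forall>t\<in>{0..1}. u t \<in> \<Omega>) \<and> u 0 = p0 \<and> u 1 = p1}"

definition Mfun :: "(real ^ 'n \<Rightarrow> real) \<Rightarrow> (real \<Rightarrow> real ^ 'n) \<Rightarrow> real" where
  "Mfun V u = (1/2) * integral {0..1} (\<lambda>t. (norm (wderiv u t))\<^sup>2) * integral {0..1} (\<lambda>t. V (u t))"

definition Lfun :: "(real ^ 'n \<Rightarrow> real) \<Rightarrow> (real \<Rightarrow> real ^ 'n) \<Rightarrow> real" where
  "Lfun V u = integral {0..1} (\<lambda>t. norm (wderiv u t) * sqrt (V (u t)))"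

end

theory Submission
  imports Defs
begin

(* By Cauchy-Schwarz, (L u)^2 <= 2 M u.  Conversely, running a competitor w with the clock
   t = integral_0^s rho (rho continuous, positive, of mean 1) keeps it admissible and turns
   2 M into (integral |w'|^2 / rho) * (integral rho V(w)).  Minimality of u therefore gives
   (L u)^2 <= (integral |w'|^2 / rho) * (integral rho V(w)) for all such weights rho.  The
   infimum of the right-hand side over these weights is (L w)^2: the Cauchy-Schwarz equality
   weight |w'| / sqrt (V w), clamped to [e, 1/e], is an almost everywhere limit of continuous
   weights.  Since M is defined through an arbitrarily chosen weak derivative, the argument
   also needs that weak derivatives are unique almost everywhere. *)

lemma Cauchy_Schwarz_integral:
  fixes f g :: "'a::euclidean_space \<Rightarrow> real"
  assumes ff: "(\<lambda>x. (f x)\<^sup>2) integrable_on S" and gg: "(\<lambda>x. (g x)\<^sup>2) integrable_on S"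
    and fg: "(\<lambda>x. f x * g x) integrable_on S"
  shows "(integral S (\<lambda>x. f x * g x))\<^sup>2 \<le> integral S (\<lambda>x. (f x)\<^sup>2) * integral S (\<lambda>x. (g x)\<^sup>2)"
proof -
  define A B C where "A = integral S (\<lambda>x. (f x)\<^sup>2)" and "B = integral S (\<lambda>x. f x * g x)"
    and "C = integral S (\<lambda>x. (g x)\<^sup>2)"
  have quadratic_nonneg: "0 \<le> A * t\<^sup>2 - 2 * B * t + C" for t
  proof -
    have int: "(\<lambda>x. t\<^sup>2 * (f x)\<^sup>2 - 2 * t * (f x * g x) + (g x)\<^sup>2) integrable_on S"
      using ff gg fg by (intro integrable_add integrable_diff integrable_on_mult_right)
    have "0 \<le> integral S (\<lambda>x. t\<^sup>2 * (f x)\<^sup>2 - 2 * t * (f x * g x) + (g x)\<^sup>2)"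
    proof (rule integral_nonneg[OF int])
      show "0 \<le> t\<^sup>2 * (f x)\<^sup>2 - 2 * t * (f x * g x) + (g x)\<^sup>2" for x
        using zero_le_power2[of "t * f x - g x"] by (simp add: power2_eq_square algebra_simps)
    qed
    also have "\<dots> = A * t\<^sup>2 - 2 * B * t + C"
      unfolding A_def B_def C_def using ff gg fg
      by (simp add: integral_add integral_diff integrable_diff integrable_on_mult_right)
    finally show ?thesis .
  qed
  have "0 \<le> A"
    unfolding A_def using ff by (rule integral_nonneg) simp
  then consider "A = 0" | "0 < A"
    by linarith
  then have "B\<^sup>2 \<le> A * C"
  proof cases
    case 1
    have "B = 0"
    proof (rule ccontr)
      assume "B \<noteq> 0"
      then show False
        using quadratic_nonneg[of "(C + 1) / (2 * B)"] 1 by (simp add: field_simps)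
    qed
    then show ?thesis
      using quadratic_nonneg[of 0] 1 by simp
  next
    case 2
    have "0 \<le> A * (A * (B / A)\<^sup>2 - 2 * B * (B / A) + C)"
      using quadratic_nonneg[of "B / A"] 2 by simp
    also have "\<dots> = A * C - B\<^sup>2"
      using 2 by (simp add: power2_eq_square field_simps)
    finally show ?thesis
      by simp
  qed
  then show ?thesis
    unfolding A_def B_def C_def .
qed

lemma absolutely_integrable_mult_bounded_continuous:
  fixes F f :: "'a::euclidean_space \<Rightarrow> real"
  assumes F: "F absolutely_integrable_on S" and f: "continuous_on S f" and S: "S \<in> sets lebesgue"
    and bnd: "\<And>x. x \<in> S \<Longrightarrow> \<bar>f x\<bar> \<le> B"
  shows "(\<lambda>x. F x * f x) absolutely_integrable_on S"
proof -
  have "bounded (f ` S)"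
    using bnd by (auto simp: bounded_iff)
  then have "(\<lambda>x. f x * F x) absolutely_integrable_on S"
    by (rule absolutely_integrable_bounded_measurable_product[OF bilinear_times
          continuous_imp_measurable_on_sets_lebesgue[OF f S] S _ F])
  then show ?thesis
    by (simp add: mult.commute)
qed

lemma absolutely_integrable_mult_continuous:
  fixes F f :: "'a::euclidean_space \<Rightarrow> real"
  assumes F: "F absolutely_integrable_on S" and f: "continuous_on S f" and S: "compact S"
  shows "(\<lambda>x. F x * f x) absolutely_integrable_on S"
proof -
  obtain B where B: "\<And>x. x \<in> S \<Longrightarrow> \<bar>f x\<bar> \<le> B"
    using compact_imp_bounded[OF compact_continuous_image[OF f S]] by (auto simp: bounded_iff)
  show ?thesis
    by (rule absolutely_integrable_mult_bounded_continuous[OF F f _ B])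
      (use S in \<open>simp add: lmeasurable_compact fmeasurableD\<close>)
qed

lemma integral_pos_if_continuous_pos:
  fixes f :: "real \<Rightarrow> real"
  assumes "a < b" and f: "continuous_on {a..b} f" and pos: "\<And>x. x \<in> {a..b} \<Longrightarrow> 0 < f x"
  shows "0 < integral {a..b} f"
proof -
  obtain x0 where x0: "x0 \<in> {a..b}" and min: "\<And>x. x \<in> {a..b} \<Longrightarrow> f x0 \<le> f x"
    using continuous_attains_inf[OF compact_Icc _ f] \<open>a < b\<close> by auto
  have "integral {a..b} (\<lambda>_. f x0) \<le> integral {a..b} f"
    using min f by (intro integral_le integrable_continuous_interval) auto
  moreover have "0 < integral {a..b} (\<lambda>_. f x0)"
    using pos[OF x0] \<open>a < b\<close> by simp
  ultimately show ?thesis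
    by linarith
qed

lemma dominated_convergence_off_negligible:
  fixes f :: "nat \<Rightarrow> 'a::euclidean_space \<Rightarrow> real"
  assumes N: "negligible N" and f: "\<And>k. f k integrable_on S" and h: "h integrable_on S"
    and le: "\<And>k x. x \<in> S \<Longrightarrow> norm (f k x) \<le> h x"
    and conv: "\<And>x. x \<in> S - N \<Longrightarrow> (\<lambda>k. f k x) \<longlonglongrightarrow> g x"
  shows "(\<lambda>k. integral S (f k)) \<longlonglongrightarrow> integral S g"
proof -
  have neg: "negligible {x \<in> S - (S - N). \<phi> x \<noteq> 0}" "negligible {x \<in> (S - N) - S. \<phi> x \<noteq> 0}"
    for \<phi> :: "'a \<Rightarrow> real"
    using N by (auto intro: negligible_subset[of N])
  have "(\<lambda>k. integral (S - N) (f k)) \<longlonglongrightarrow> integral (S - N) g"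
  proof (rule dominated_convergence(2))
    show "f k integrable_on S - N" for k
      using f by (rule integrable_spike_set[OF _ neg])
    show "h integrable_on S - N"
      using h by (rule integrable_spike_set[OF _ neg])
  qed (use le conv in auto)
  then show ?thesis
    by (simp only: integral_spike_set[OF neg])
qed

lemma tendsto_integral_mult_bounded_continuous:
  fixes F \<rho> :: "'a::euclidean_space \<Rightarrow> real" and r :: "nat \<Rightarrow> 'a \<Rightarrow> real"
  assumes S: "S \<in> sets lebesgue" and F: "F absolutely_integrable_on S"
    and r_cont: "\<And>k. continuous_on S (r k)" and r_bound: "\<And>k x. x \<in> S \<Longrightarrow> \<bar>r k x\<bar> \<le> B"
    and N: "negligible N" and lim: "\<And>x. x \<in> S - N \<Longrightarrow> (\<lambda>k. r k x) \<longlonglongrightarrow> \<rho> x"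
  shows "(\<lambda>k. integral S (\<lambda>x. r k x * F x)) \<longlonglongrightarrow> integral S (\<lambda>x. \<rho> x * F x)"
proof (rule dominated_convergence_off_negligible[OF N])
  show "(\<lambda>x. r k x * F x) integrable_on S" for k
    using absolutely_integrable_mult_bounded_continuous[OF F r_cont S r_bound]
      set_lebesgue_integral_eq_integral(1) by (fastforce simp: mult.commute)
  show "(\<lambda>x. B * norm (F x)) integrable_on S"
    using F integrable_on_mult_right[of "\<lambda>x. norm (F x)" S B] unfolding absolutely_integrable_on_def by blast
  show "norm (r k x * F x) \<le> B * norm (F x)" if "x \<in> S" for k x
    using r_bound[OF that, of k] by (simp add: abs_mult mult_right_mono)
  show "(\<lambda>k. r k x * F x) \<longlonglongrightarrow> \<rho> x * F x" if "x \<in> S - N" for x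
    using lim[OF that] by (intro tendsto_intros)
qed

lemma integral_le_add_mult:
  fixes f g h :: "'a::euclidean_space \<Rightarrow> real"
  assumes f: "f integrable_on S" and g: "g integrable_on S" and h: "h integrable_on S"
    and le: "\<And>x. x \<in> S \<Longrightarrow> f x \<le> g x + c * h x"
  shows "integral S f \<le> integral S g + c * integral S h"
proof -
  have gh: "(\<lambda>x. g x + c * h x) integrable_on S"
    using g h by (intro integrable_add integrable_on_mult_right)
  have "integral S f \<le> integral S (\<lambda>x. g x + c * h x)"
    using f gh le by (rule integral_le)
  also have "\<dots> = integral S g + c * integral S h"
    using g integrable_on_mult_right[OF h] by (simp add: integral_add)
  finally show ?thesis .
qed

lemma norm_scaleR_square:
  fixes x :: "'a::real_normed_vector"
  shows "(norm (x /\<^sub>R c))\<^sup>2 = (norm x)\<^sup>2 / c\<^sup>2"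
  by (simp add: power_mult_distrib power_inverse divide_inverse mult.commute)

section \<open>Uniqueness of weak derivatives\<close>

lemma AE_zero_if_integrals_greaterThan_zero:
  fixes k :: "real \<Rightarrow> real"
  assumes k: "integrable lborel k"
    and zero: "\<And>a. integral {a<..} k = 0"
  shows "AE x in lborel. k x = 0"
proof -
  have [measurable]: "k \<in> borel_measurable borel" using k by auto
  have part_integrable: "integrable lborel (\<lambda>x. indicator {a<..} x * max 0 (f x))"
    if "integrable lborel f" for f :: "real \<Rightarrow> real" and a
    using integrable_mult_indicator[OF _ integrable_max[OF integrable_zero that], of "{a<..}"] by simp
  have density_greaterThan: "emeasure (density lborel (\<lambda>x. ennreal (max 0 (f x)))) {a<..}
      = ennreal (LINT x|lborel. indicator {a<..} x * max 0 (f x))"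
    if f: "integrable lborel f" for f :: "real \<Rightarrow> real" and a
  proof -
    have "emeasure (density lborel (\<lambda>x. ennreal (max 0 (f x)))) {a<..}
        = (\<integral>\<^sup>+x. ennreal (indicator {a<..} x * max 0 (f x)) \<partial>lborel)"
      using f by (subst emeasure_density) (auto intro!: nn_integral_cong simp: indicator_def)
    also have "\<dots> = ennreal (LINT x|lborel. indicator {a<..} x * max 0 (f x))"
      using part_integrable[OF f] by (rule nn_integral_eq_integral) simp
    finally show ?thesis .
  qed
  \<comment> \<open>The positive and negative parts of k agree as densities on all half-lines, hence everywhere.\<close>
  have "density lborel (\<lambda>x. ennreal (max 0 (k x))) = density lborel (\<lambda>x. ennreal (max 0 (- k x)))"
  proof (rule measure_eqI_lessThan)
    fix a :: real
    have "(LINT x|lborel. indicator {a<..} x * max 0 (k x)) - (LINT x|lborel. indicator {a<..} x * max 0 (- k x))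
        = (LINT x|lborel. indicator {a<..} x * max 0 (k x) - indicator {a<..} x * max 0 (- k x))"
      using part_integrable[OF k] part_integrable[OF integrable_minus[OF k]]
      by (rule Bochner_Integration.integral_diff[symmetric])
    also have "\<dots> = (LINT x|lborel. indicator {a<..} x * k x)"
      by (rule Bochner_Integration.integral_cong) (auto simp: indicator_def max_def)
    also have "\<dots> = integral UNIV (\<lambda>x. indicator {a<..} x * k x)"
      using k by (intro integral_lborel[symmetric] integrable_mult_indicator[of _ _ k, simplified]) auto
    also have "\<dots> = integral {a<..} k"
      unfolding indicator_times_eq_if by (rule integral_restrict_UNIV)
    finally show "emeasure (density lborel (\<lambda>x. ennreal (max 0 (k x)))) {a<..}
        = emeasure (density lborel (\<lambda>x. ennreal (max 0 (- k x)))) {a<..}"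
      using zero[of a] density_greaterThan[OF k] density_greaterThan[OF integrable_minus[OF k]] by simp
    show "emeasure (density lborel (\<lambda>x. ennreal (max 0 (k x)))) {a<..} < \<infinity>"
      using density_greaterThan[OF k] by simp
  qed auto
  then have "AE x in lborel. ennreal (max 0 (k x)) = ennreal (max 0 (- k x))"
    by (subst (asm) sigma_finite_measure.density_unique_iff[OF sigma_finite_lborel]) auto
  then show ?thesis
    by eventually_elim (auto simp: max_def split: if_splits)
qed

lemma negligible_if_integrals_greaterThan_zero:
  fixes k :: "real \<Rightarrow> real"
  assumes k: "k absolutely_integrable_on UNIV" and zero: "\<And>c. integral {c<..} k = 0"
  shows "negligible {x. k x \<noteq> 0}"
proof -
  have k_lebesgue: "integrable lebesgue k"
    using k unfolding set_integrable_def by simp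
  then obtain k0 where k0: "k0 \<in> borel_measurable lborel" and "AE x in lborel. k x = k0 x"
    using completion_ex_borel_measurable_real by blast
  then have ae: "AE x in lebesgue. k x = k0 x"
    by (blast intro: AE_completion)
  then obtain N where N: "negligible N" "{x. k x \<noteq> k0 x} \<subseteq> N"
    unfolding eventually_ae_filter_negligible by auto
  have "integrable lebesgue k0"
    using integrable_cong_AE[OF borel_measurable_integrable[OF k_lebesgue] measurable_completion[OF k0] ae]
      k_lebesgue by simp
  then have "integrable lborel k0"
    using integrable_completion[OF k0] by blast
  moreover have "integral {c<..} k0 = 0" for c
  proof -
    have "integral {c<..} k0 = integral {c<..} k"
      by (rule integral_spike[OF N(1)]) (use N(2) in blast)
    then show ?thesis
      using zero[of c] by simp
  qed
  ultimately have "AE x in lborel. k0 x = 0"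
    by (rule AE_zero_if_integrals_greaterThan_zero)
  then have "AE x in lebesgue. k0 x = 0"
    by (rule AE_completion)
  with ae have "AE x in lebesgue. k x = 0"
    by eventually_elim simp
  then obtain N' where "negligible N'" "{x. k x \<noteq> 0} \<subseteq> N'"
    unfolding eventually_ae_filter_negligible by auto
  then show ?thesis
    by (rule negligible_subset)
qed

lemma negligible_if_indefinite_integral_zero:
  fixes k :: "real \<Rightarrow> real"
  assumes k: "k absolutely_integrable_on {a..b}"
    and zero: "\<And>t. t \<in> {a..b} \<Longrightarrow> integral {a..t} k = 0"
  shows "negligible {t \<in> {a..b}. k t \<noteq> 0}"
proof -
  have "integral ({a..b} \<inter> {c<..}) k = 0" for c
  proof -
    consider "c < a" | "b \<le> c" | "a \<le> c" "c < b"
      by linarith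
    then show ?thesis
    proof cases
      case 1
      then have "{a..b} \<inter> {c<..} = {a..b}"
        by auto
      then show ?thesis
        using zero[of b] by (cases "a \<le> b") simp_all
    next
      case 2
      then have "{a..b} \<inter> {c<..} = {}"
        by auto
      then show ?thesis
        by simp
    next
      case 3
      have "integral {a..c} k + integral {c..b} k = integral {a..b} k"
        using 3 k unfolding absolutely_integrable_on_def
        by (intro Henstock_Kurzweil_Integration.integral_combine) simp_all
      moreover have "integral ({a..b} \<inter> {c<..}) k = integral {c..b} k"
        by (rule integral_spike_set; rule negligible_subset[of "{c}"]) (use 3 in auto)
      ultimately show ?thesis
        using zero[of b] zero[of c] 3 by simp
    qed
  qed
  then have "integral {c<..} (\<lambda>x. if x \<in> {a..b} then k x else 0) = 0" for c
    by (simp only: integral_restrict_Int)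
  moreover have "(\<lambda>x. if x \<in> {a..b} then k x else 0) absolutely_integrable_on UNIV"
    using k by (simp only: absolutely_integrable_restrict_UNIV)
  ultimately have "negligible {x. (if x \<in> {a..b} then k x else 0) \<noteq> 0}"
    by (intro negligible_if_integrals_greaterThan_zero)
  then show ?thesis
    by (rule negligible_subset) auto
qed

lemma H1_weak_deriv_unique:
  assumes h: "H1_weak_deriv z h" and h': "H1_weak_deriv z h'"
  shows "negligible {t \<in> {0..1}. h t \<noteq> h' t}"
proof -
  have int: "f absolutely_integrable_on {0..1}"
    and z: "\<And>t. t \<in> {0..1} \<Longrightarrow> z t = z 0 + integral {0..t} f"
    if "H1_weak_deriv z f" for f
    using that unfolding H1_weak_deriv_def by blast+
  have int_sub: "f integrable_on {0..t}" if "H1_weak_deriv z f" "t \<in> {0..1}" for f t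
  proof -
    have "f integrable_on {0..1}"
      using int[OF that(1)] by (simp add: absolutely_integrable_on_def)
    then show ?thesis
      by (rule integrable_subinterval_real) (use that(2) in auto)
  qed
  have "negligible {t \<in> {0..1}. (h t - h' t) $ i \<noteq> 0}" for i
  proof (rule negligible_if_indefinite_integral_zero)
    show "(\<lambda>t. (h t - h' t) $ i) absolutely_integrable_on {0..1}"
      using absolutely_integrable_component[OF set_integral_diff(1)[OF int(1)[OF h] int(1)[OF h']], of "axis i 1"]
      by (simp add: inner_axis)
    fix t :: real
    assume t: "t \<in> {0..1}"
    have "integral {0..t} (\<lambda>x. (h x - h' x) $ i) = integral {0..t} (\<lambda>x. h x - h' x) $ i"
      using int_sub[OF h t] int_sub[OF h' t] by (intro integral_component_eq_cart integrable_diff)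
    also have "\<dots> = (integral {0..t} h - integral {0..t} h') $ i"
      using int_sub[OF h t] int_sub[OF h' t] by (simp add: integral_diff)
    also have "\<dots> = 0"
      using z[OF h t] z[OF h' t] by simp
    finally show "integral {0..t} (\<lambda>x. (h x - h' x) $ i) = 0" .
  qed
  then have "negligible (\<Union>i. {t \<in> {0..1}. (h t - h' t) $ i \<noteq> 0})"
    by (intro negligible_Union) auto
  moreover have "{t \<in> {0..1}. h t \<noteq> h' t} = (\<Union>i. {t \<in> {0..1}. (h t - h' t) $ i \<noteq> 0})"
    by (auto simp: vec_eq_iff)
  ultimately show ?thesis
    by simp
qed

lemma H1_weak_deriv_wderiv:
  assumes "H1 z"
  shows "H1_weak_deriv z (wderiv z)"
  using assms unfolding H1_def wderiv_def by (rule someI_ex)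

lemma integral_norm_wderiv:
  assumes "H1_weak_deriv z h"
  shows "integral {0..1} (\<lambda>t. (norm (wderiv z t))\<^sup>2) = integral {0..1} (\<lambda>t. (norm (h t))\<^sup>2)"
proof -
  have "H1 z"
    using assms unfolding H1_def by blast
  then have "negligible {t \<in> {0..1}. h t \<noteq> wderiv z t}"
    using assms by (blast intro: H1_weak_deriv_unique H1_weak_deriv_wderiv)
  then show ?thesis
    by (rule integral_spike[symmetric]) auto
qed

lemma H1_weak_deriv_imp_continuous_on:
  assumes "H1_weak_deriv z g"
  shows "continuous_on {0..1} z"
proof -
  have "g integrable_on {0..1}" and z: "\<And>t. t \<in> {0..1} \<Longrightarrow> z t = z 0 + integral {0..t} g"
    using assms unfolding H1_weak_deriv_def absolutely_integrable_on_def by blast+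
  then have "continuous_on {0..1} (\<lambda>t. z 0 + integral {0..t} g)"
    by (intro continuous_intros indefinite_integral_continuous_1)
  then show ?thesis
    by (rule continuous_on_eq) (use z in presburger)
qed

section \<open>Increasing changes of variables\<close>

lemma strict_mono_on_if_pos_derivative:
  fixes \<psi> \<rho> :: "real \<Rightarrow> real"
  assumes der: "\<And>s. s \<in> {a..b} \<Longrightarrow> (\<psi> has_real_derivative \<rho> s) (at s within {a..b})"
    and pos: "\<And>s. s \<in> {a..b} \<Longrightarrow> 0 < \<rho> s"
  shows "strict_mono_on {a..b} \<psi>"
proof (rule strict_mono_onI)
  fix x y
  assume xy: "x \<in> {a..b}" "y \<in> {a..b}" "x < y"
  have "continuous_on {a..b} \<psi>"
    using der by (rule DERIV_continuous_on)
  then have "continuous_on {x..y} \<psi>"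
    by (rule continuous_on_subset) (use xy in auto)
  moreover have "\<exists>l. (\<psi> has_real_derivative l) (at z) \<and> 0 < l" if "x < z" "z < y" for z
    using der[of z] pos[of z] xy that by (auto simp: at_within_Icc_at)
  ultimately show "\<psi> x < \<psi> y"
    using DERIV_pos_imp_increasing_open[OF \<open>x < y\<close>] by blast
qed

lemma image_Icc_if_pos_derivative:
  fixes \<psi> \<rho> :: "real \<Rightarrow> real"
  assumes "a \<le> b"
    and der: "\<And>s. s \<in> {a..b} \<Longrightarrow> (\<psi> has_real_derivative \<rho> s) (at s within {a..b})"
    and pos: "\<And>s. s \<in> {a..b} \<Longrightarrow> 0 < \<rho> s"
  shows "\<psi> ` {a..b} = {\<psi> a..\<psi> b}"
proof
  have mono: "strict_mono_on {a..b} \<psi>"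
    using der pos by (rule strict_mono_on_if_pos_derivative)
  show "\<psi> ` {a..b} \<subseteq> {\<psi> a..\<psi> b}"
    using strict_mono_on_leD[OF mono, of a] strict_mono_on_leD[OF mono, of _ b] \<open>a \<le> b\<close> by auto
  show "{\<psi> a..\<psi> b} \<subseteq> \<psi> ` {a..b}"
  proof
    fix y
    assume "y \<in> {\<psi> a..\<psi> b}"
    moreover have "continuous_on {a..b} \<psi>"
      using der by (rule DERIV_continuous_on)
    ultimately obtain x where "a \<le> x" "x \<le> b" "\<psi> x = y"
      using IVT'[of \<psi> a y b] \<open>a \<le> b\<close> by auto
    then show "y \<in> \<psi> ` {a..b}"
      by auto
  qed
qed

lemma has_absolute_integral_increasing_substitution:
  fixes f :: "real \<Rightarrow> 'a::euclidean_space" and \<psi> \<rho> :: "real \<Rightarrow> real"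
  assumes "a \<le> b"
    and der: "\<And>s. s \<in> {a..b} \<Longrightarrow> (\<psi> has_real_derivative \<rho> s) (at s within {a..b})"
    and pos: "\<And>s. s \<in> {a..b} \<Longrightarrow> 0 < \<rho> s"
    and f: "(\<lambda>s. \<rho> s *\<^sub>R f (\<psi> s)) absolutely_integrable_on {a..b}"
  shows "f absolutely_integrable_on {\<psi> a..\<psi> b}
    \<and> integral {\<psi> a..\<psi> b} f = integral {a..b} (\<lambda>s. \<rho> s *\<^sub>R f (\<psi> s))"
proof -
  have "(\<lambda>s. \<bar>\<rho> s\<bar> *\<^sub>R f (\<psi> s)) absolutely_integrable_on {a..b}
      \<and> integral {a..b} (\<lambda>s. \<bar>\<rho> s\<bar> *\<^sub>R f (\<psi> s)) = integral {a..b} (\<lambda>s. \<rho> s *\<^sub>R f (\<psi> s))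
    \<longleftrightarrow> f absolutely_integrable_on \<psi> ` {a..b}
      \<and> integral (\<psi> ` {a..b}) f = integral {a..b} (\<lambda>s. \<rho> s *\<^sub>R f (\<psi> s))"
    by (rule has_absolute_integral_change_of_variables_real[OF _ der strict_mono_on_imp_inj_on[OF
          strict_mono_on_if_pos_derivative[OF der pos]]]) simp_all
  moreover have "(\<lambda>s. \<bar>\<rho> s\<bar> *\<^sub>R f (\<psi> s)) absolutely_integrable_on {a..b}"
    using f by (rule set_integrable_cong[THEN iffD1, rotated 3]) (simp_all add: abs_of_pos pos)
  moreover have "integral {a..b} (\<lambda>s. \<bar>\<rho> s\<bar> *\<^sub>R f (\<psi> s)) = integral {a..b} (\<lambda>s. \<rho> s *\<^sub>R f (\<psi> s))"
    by (rule integral_cong) (simp_all add: abs_of_pos pos)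
  ultimately show ?thesis
    using f image_Icc_if_pos_derivative[OF assms(1-3)] by simp
qed

section \<open>Time changes of admissible curves\<close>

(* The inverse of the clock s |-> integral {0..s} rho, a bijection of [0,1] when rho is positive
   with integral 1.  The curve w o time_change rho has velocity w'/rho (at the original time), so
   rho redistributes the speed of w without changing its trace. *)
definition time_change :: "(real \<Rightarrow> real) \<Rightarrow> real \<Rightarrow> real" where
  "time_change \<rho> = inv_into {0..1} (\<lambda>s. integral {0..s} \<rho>)"

context
  fixes \<rho> :: "real \<Rightarrow> real"
  assumes \<rho>_cont: "continuous_on {0..1} \<rho>"
    and \<rho>_pos: "\<And>s. s \<in> {0..1} \<Longrightarrow> 0 < \<rho> s"
    and \<rho>_integral: "integral {0..1} \<rho> = 1"
begin

lemma clock_derivative: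
  assumes "s \<in> {0..1}"
  shows "((\<lambda>s. integral {0..s} \<rho>) has_real_derivative \<rho> s) (at s within {0..1})"
  using \<rho>_cont assms by (rule integral_has_real_derivative)

lemma clock_image: "(\<lambda>s. integral {0..s} \<rho>) ` {0..1} = {0..1}"
  using image_Icc_if_pos_derivative[of 0 1, OF _ clock_derivative \<rho>_pos] \<rho>_integral by simp

lemma clock_inj_on: "inj_on (\<lambda>s. integral {0..s} \<rho>) {0..1}"
  by (rule strict_mono_on_imp_inj_on[OF strict_mono_on_if_pos_derivative[OF clock_derivative \<rho>_pos]])

lemma time_change_in_unit_interval:
  assumes "t \<in> {0..1}"
  shows "time_change \<rho> t \<in> {0..1}"
  unfolding time_change_def by (rule inv_into_into) (use assms clock_image in simp)

lemma clock_time_change: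
  assumes "t \<in> {0..1}"
  shows "integral {0..time_change \<rho> t} \<rho> = t"
  unfolding time_change_def by (rule f_inv_into_f) (use assms clock_image in simp)

lemma time_change_clock:
  assumes "s \<in> {0..1}"
  shows "time_change \<rho> (integral {0..s} \<rho>) = s"
  unfolding time_change_def by (rule inv_into_f_f[OF clock_inj_on assms])

lemma time_change_0: "time_change \<rho> 0 = 0"
  using time_change_clock[of 0] by simp

lemma time_change_1: "time_change \<rho> 1 = 1"
  using time_change_clock[of 1] \<rho>_integral by simp

lemma has_absolute_integral_time_change:
  fixes f :: "real \<Rightarrow> 'a::euclidean_space"
  assumes t: "t \<in> {0..1}"
    and f: "(\<lambda>s. \<rho> s *\<^sub>R f s) absolutely_integrable_on {0..time_change \<rho> t}"
  shows "(\<lambda>\<tau>. f (time_change \<rho> \<tau>)) absolutely_integrable_on {0..t}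
    \<and> integral {0..t} (\<lambda>\<tau>. f (time_change \<rho> \<tau>)) = integral {0..time_change \<rho> t} (\<lambda>s. \<rho> s *\<^sub>R f s)"
proof -
  let ?\<phi> = "time_change \<rho>" and ?\<psi> = "\<lambda>s. integral {0..s} \<rho>"
  have sub: "{0..?\<phi> t} \<subseteq> {0..1}"
    using time_change_in_unit_interval[OF t] by auto
  have "(\<lambda>\<tau>. f (?\<phi> \<tau>)) absolutely_integrable_on {?\<psi> 0..?\<psi> (?\<phi> t)}
      \<and> integral {?\<psi> 0..?\<psi> (?\<phi> t)} (\<lambda>\<tau>. f (?\<phi> \<tau>)) = integral {0..?\<phi> t} (\<lambda>s. \<rho> s *\<^sub>R f (?\<phi> (?\<psi> s)))"
  proof (rule has_absolute_integral_increasing_substitution[where f = "\<lambda>\<tau>. f (?\<phi> \<tau>)"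
        and \<psi> = ?\<psi> and \<rho> = \<rho> and a = 0 and b = "?\<phi> t"])
    show "0 \<le> ?\<phi> t"
      using time_change_in_unit_interval[OF t] by simp
    show "(?\<psi> has_real_derivative \<rho> s) (at s within {0..?\<phi> t})" if "s \<in> {0..?\<phi> t}" for s
      by (rule DERIV_subset[OF clock_derivative]) (use that sub in auto)
    show "0 < \<rho> s" if "s \<in> {0..?\<phi> t}" for s
      using \<rho>_pos that sub by auto
    have "(\<lambda>s. \<rho> s *\<^sub>R f (?\<phi> (?\<psi> s))) absolutely_integrable_on {0..?\<phi> t}
        \<longleftrightarrow> (\<lambda>s. \<rho> s *\<^sub>R f s) absolutely_integrable_on {0..?\<phi> t}"
      by (rule set_integrable_cong) (use sub time_change_clock in auto)
    then show "(\<lambda>s. \<rho> s *\<^sub>R f (?\<phi> (?\<psi> s))) absolutely_integrable_on {0..?\<phi> t}"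
      using f by blast
  qed
  moreover have "integral {0..?\<phi> t} (\<lambda>s. \<rho> s *\<^sub>R f (?\<phi> (?\<psi> s))) = integral {0..?\<phi> t} (\<lambda>s. \<rho> s *\<^sub>R f s)"
    by (rule integral_cong) (use sub time_change_clock in auto)
  moreover have "?\<psi> 0 = 0" "?\<psi> (?\<phi> t) = t"
    using clock_time_change[OF t] by simp_all
  ultimately show ?thesis
    by (simp only:)
qed

lemma integral_norm_square_time_change:
  assumes "(\<lambda>s. (norm (g s))\<^sup>2) integrable_on {0..1}"
  shows "(\<lambda>\<tau>. (norm (g (time_change \<rho> \<tau>)))\<^sup>2 / (\<rho> (time_change \<rho> \<tau>))\<^sup>2) absolutely_integrable_on {0..1}
    \<and> integral {0..1} (\<lambda>\<tau>. (norm (g (time_change \<rho> \<tau>)))\<^sup>2 / (\<rho> (time_change \<rho> \<tau>))\<^sup>2)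
      = integral {0..1} (\<lambda>s. (norm (g s))\<^sup>2 / \<rho> s)"
proof -
  have ne: "\<rho> s \<noteq> 0" if "s \<in> {0..1}" for s
    using \<rho>_pos[OF that] by simp
  have "(\<lambda>s. (norm (g s))\<^sup>2 * (1 / \<rho> s)) absolutely_integrable_on {0..1}"
  proof (rule absolutely_integrable_mult_continuous)
    show "(\<lambda>s. (norm (g s))\<^sup>2) absolutely_integrable_on {0..1}"
      using assms by (rule nonnegative_absolutely_integrable_1) simp
    show "continuous_on {0..1} (\<lambda>s. 1 / \<rho> s)"
      using \<rho>_cont ne by (intro continuous_intros) auto
  qed simp
  then have "(\<lambda>s. \<rho> s *\<^sub>R ((norm (g s))\<^sup>2 / (\<rho> s)\<^sup>2)) absolutely_integrable_on {0..1}"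
    by (rule set_integrable_cong[THEN iffD1, rotated 3]) (simp_all add: ne power2_eq_square)
  moreover have "integral {0..1} (\<lambda>s. \<rho> s *\<^sub>R ((norm (g s))\<^sup>2 / (\<rho> s)\<^sup>2))
      = integral {0..1} (\<lambda>s. (norm (g s))\<^sup>2 / \<rho> s)"
    by (rule integral_cong) (simp add: ne power2_eq_square)
  ultimately show ?thesis
    using has_absolute_integral_time_change[of 1 "\<lambda>s. (norm (g s))\<^sup>2 / (\<rho> s)\<^sup>2"] time_change_1
    by simp
qed

lemma H1_weak_deriv_time_change:
  assumes w: "H1_weak_deriv w g"
  shows "H1_weak_deriv (\<lambda>t. w (time_change \<rho> t)) (\<lambda>t. g (time_change \<rho> t) /\<^sub>R \<rho> (time_change \<rho> t))"
proof -
  let ?\<phi> = "time_change \<rho>"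
  have g: "g absolutely_integrable_on {0..1}" and g2: "(\<lambda>t. (norm (g t))\<^sup>2) integrable_on {0..1}"
    and wg: "\<And>t. t \<in> {0..1} \<Longrightarrow> w t = w 0 + integral {0..t} g"
    using w unfolding H1_weak_deriv_def by blast+
  have h: "(\<lambda>\<tau>. g (?\<phi> \<tau>) /\<^sub>R \<rho> (?\<phi> \<tau>)) absolutely_integrable_on {0..t}
      \<and> integral {0..t} (\<lambda>\<tau>. g (?\<phi> \<tau>) /\<^sub>R \<rho> (?\<phi> \<tau>)) = integral {0..?\<phi> t} g"
    if t: "t \<in> {0..1}" for t
  proof -
    have sub: "{0..?\<phi> t} \<subseteq> {0..1}"
      using time_change_in_unit_interval[OF t] by auto
    have eq: "\<rho> s *\<^sub>R (g s /\<^sub>R \<rho> s) = g s" if "s \<in> {0..?\<phi> t}" for s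
      using \<rho>_pos[of s] that sub by auto
    have ne: "\<rho> s \<noteq> 0" if "s \<in> {0..?\<phi> t}" for s
      using \<rho>_pos[of s] that sub by auto
    have "(\<lambda>s. \<rho> s *\<^sub>R (g s /\<^sub>R \<rho> s)) absolutely_integrable_on {0..?\<phi> t}"
      using absolutely_integrable_on_subinterval[OF g sub]
      by (rule set_integrable_cong[THEN iffD1, rotated 3]) (simp_all add: ne)
    moreover have "integral {0..?\<phi> t} (\<lambda>s. \<rho> s *\<^sub>R (g s /\<^sub>R \<rho> s)) = integral {0..?\<phi> t} g"
      by (rule integral_cong) (rule eq)
    ultimately show ?thesis
      using has_absolute_integral_time_change[OF t, of "\<lambda>s. g s /\<^sub>R \<rho> s"] by simp
  qed
  have "(\<lambda>\<tau>. (norm (g (?\<phi> \<tau>)))\<^sup>2 / (\<rho> (?\<phi> \<tau>))\<^sup>2) absolutely_integrable_on {0..1}"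
    using integral_norm_square_time_change[OF g2] ..
  then have "(\<lambda>\<tau>. (norm (g (?\<phi> \<tau>) /\<^sub>R \<rho> (?\<phi> \<tau>)))\<^sup>2) integrable_on {0..1}"
    unfolding norm_scaleR_square by (rule set_lebesgue_integral_eq_integral(1))
  moreover have "w (?\<phi> t) = w (?\<phi> 0) + integral {0..t} (\<lambda>\<tau>. g (?\<phi> \<tau>) /\<^sub>R \<rho> (?\<phi> \<tau>))"
    if "t \<in> {0..1}" for t
    using wg[OF time_change_in_unit_interval[OF that]] conjunct2[OF h[OF that]] time_change_0
    by (simp only:)
  moreover have "(\<lambda>\<tau>. g (?\<phi> \<tau>) /\<^sub>R \<rho> (?\<phi> \<tau>)) absolutely_integrable_on {0..1}"
    using h[of 1] by simp
  ultimately show ?thesis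
    unfolding H1_weak_deriv_def by blast
qed

lemma admissible_time_change:
  assumes "w \<in> admissible \<Omega> p0 p1"
  shows "(\<lambda>t. w (time_change \<rho> t)) \<in> admissible \<Omega> p0 p1"
proof -
  have "H1 (\<lambda>t. w (time_change \<rho> t))"
    using assms H1_weak_deriv_time_change[OF H1_weak_deriv_wderiv]
    unfolding admissible_def H1_def[of "\<lambda>t. w (time_change \<rho> t)"] by blast
  then show ?thesis
    using assms time_change_in_unit_interval by (simp add: admissible_def time_change_0 time_change_1)
qed

lemma Mfun_time_change:
  assumes w: "H1 w" and V: "continuous_on {0..1} (\<lambda>t. V (w t))"
  shows "2 * Mfun V (\<lambda>t. w (time_change \<rho> t))
    = integral {0..1} (\<lambda>s. (norm (wderiv w s))\<^sup>2 / \<rho> s) * integral {0..1} (\<lambda>s. \<rho> s * V (w s))"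
proof -
  let ?\<phi> = "time_change \<rho>"
  have g: "H1_weak_deriv w (wderiv w)"
    using w by (rule H1_weak_deriv_wderiv)
  then have g2: "(\<lambda>t. (norm (wderiv w t))\<^sup>2) integrable_on {0..1}"
    unfolding H1_weak_deriv_def by blast
  have "integral {0..1} (\<lambda>t. (norm (wderiv (\<lambda>t. w (?\<phi> t)) t))\<^sup>2)
      = integral {0..1} (\<lambda>\<tau>. (norm (wderiv w (?\<phi> \<tau>) /\<^sub>R \<rho> (?\<phi> \<tau>)))\<^sup>2)"
    by (rule integral_norm_wderiv[OF H1_weak_deriv_time_change[OF g]])
  also have "\<dots> = integral {0..1} (\<lambda>s. (norm (wderiv w s))\<^sup>2 / \<rho> s)"
    unfolding norm_scaleR_square using integral_norm_square_time_change[OF g2] ..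
  finally have kinetic: "integral {0..1} (\<lambda>t. (norm (wderiv (\<lambda>t. w (?\<phi> t)) t))\<^sup>2)
      = integral {0..1} (\<lambda>s. (norm (wderiv w s))\<^sup>2 / \<rho> s)" .
  have "(\<lambda>s. \<rho> s * V (w s)) absolutely_integrable_on {0..1}"
    using \<rho>_cont V by (intro absolutely_integrable_continuous_real continuous_intros)
  then have potential: "integral {0..1} (\<lambda>t. V (w (?\<phi> t))) = integral {0..1} (\<lambda>s. \<rho> s * V (w s))"
    using has_absolute_integral_time_change[of 1 "\<lambda>s. V (w s)"] time_change_1 by simp
  show ?thesis
    unfolding Mfun_def kinetic potential by simp
qed

end

section \<open>Comparing the two functionals\<close>

lemma continuous_on_potential_admissible:
  assumes "continuous_on \<Omega> V" and "w \<in> admissible \<Omega> p0 p1"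
  shows "continuous_on {0..1} (\<lambda>t. V (w t))"
proof (rule continuous_on_compose2[OF assms(1)])
  show "continuous_on {0..1} w"
    using assms(2) unfolding admissible_def H1_def by (blast intro: H1_weak_deriv_imp_continuous_on)
  show "w ` {0..1} \<subseteq> \<Omega>"
    using assms(2) unfolding admissible_def by blast
qed

lemma absolutely_integrable_Lfun_integrand:
  assumes "H1 w" and "continuous_on {0..1} (\<lambda>t. V (w t))"
  shows "(\<lambda>t. norm (wderiv w t) * sqrt (V (w t))) absolutely_integrable_on {0..1}"
proof (rule absolutely_integrable_mult_continuous)
  have "wderiv w absolutely_integrable_on {0..1}"
    using H1_weak_deriv_wderiv[OF assms(1)] unfolding H1_weak_deriv_def by blast
  then show "(\<lambda>t. norm (wderiv w t)) absolutely_integrable_on {0..1}"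
    using absolutely_integrable_norm by (auto simp: o_def)
  show "continuous_on {0..1} (\<lambda>t. sqrt (V (w t)))"
    using assms(2) by (intro continuous_intros)
qed simp

lemma Lfun_nonneg:
  assumes "H1 w" and "continuous_on {0..1} (\<lambda>t. V (w t))" and "\<And>t. t \<in> {0..1} \<Longrightarrow> 0 < V (w t)"
  shows "0 \<le> Lfun V w"
  unfolding Lfun_def
  using set_lebesgue_integral_eq_integral(1)[OF absolutely_integrable_Lfun_integrand[OF assms(1,2)]]
  by (rule integral_nonneg) (simp add: assms(3) less_imp_le)

lemma Lfun_square_le_Mfun:
  assumes u: "H1 u" and V: "continuous_on {0..1} (\<lambda>t. V (u t))"
    and pos: "\<And>t. t \<in> {0..1} \<Longrightarrow> 0 < V (u t)"
  shows "(Lfun V u)\<^sup>2 \<le> 2 * Mfun V u"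
proof -
  have sqrt_square: "integral {0..1} (\<lambda>t. (sqrt (V (u t)))\<^sup>2) = integral {0..1} (\<lambda>t. V (u t))"
    by (rule integral_cong) (simp add: pos less_imp_le)
  have "(\<lambda>t. (norm (wderiv u t))\<^sup>2) integrable_on {0..1}"
    using H1_weak_deriv_wderiv[OF u] unfolding H1_weak_deriv_def by blast
  moreover have "(\<lambda>t. (sqrt (V (u t)))\<^sup>2) integrable_on {0..1}"
    by (rule integrable_eq[OF integrable_continuous_interval[OF V]]) (simp add: pos less_imp_le)
  moreover have "(\<lambda>t. norm (wderiv u t) * sqrt (V (u t))) integrable_on {0..1}"
    using set_lebesgue_integral_eq_integral(1)[OF absolutely_integrable_Lfun_integrand[OF u V]] .
  ultimately show ?thesis
    unfolding Lfun_def Mfun_def using Cauchy_Schwarz_integral sqrt_square by fastforce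
qed

lemma square_Lfun_le_weighted_energy:
  assumes V: "continuous_on \<Omega> V" and V_pos: "\<And>x. x \<in> \<Omega> \<Longrightarrow> 0 < V x"
    and u: "u \<in> admissible \<Omega> p0 p1" and min: "\<And>w. w \<in> admissible \<Omega> p0 p1 \<Longrightarrow> Mfun V u \<le> Mfun V w"
    and w: "w \<in> admissible \<Omega> p0 p1"
    and \<rho>_cont: "continuous_on {0..1} \<rho>" and \<rho>_pos: "\<And>s. s \<in> {0..1} \<Longrightarrow> 0 < \<rho> s"
  shows "(Lfun V u)\<^sup>2
    \<le> integral {0..1} (\<lambda>s. (norm (wderiv w s))\<^sup>2 / \<rho> s) * integral {0..1} (\<lambda>s. \<rho> s * V (w s))"
proof -
  define c where "c = integral {0..1} \<rho>"
  have c: "0 < c"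
    unfolding c_def using \<rho>_cont \<rho>_pos by (intro integral_pos_if_continuous_pos) auto
  define \<rho>' where "\<rho>' s = \<rho> s / c" for s
  have \<rho>': "continuous_on {0..1} \<rho>'" "\<And>s. s \<in> {0..1} \<Longrightarrow> 0 < \<rho>' s" "integral {0..1} \<rho>' = 1"
    unfolding \<rho>'_def using \<rho>_cont \<rho>_pos c by (auto intro!: continuous_intros simp: c_def)
  have u_H1: "H1 u" and w_H1: "H1 w"
    using u w unfolding admissible_def by blast+
  have "(Lfun V u)\<^sup>2 \<le> 2 * Mfun V u"
    using u V_pos unfolding admissible_def
    by (intro Lfun_square_le_Mfun u_H1 continuous_on_potential_admissible[OF V u]) auto
  also have "\<dots> \<le> 2 * Mfun V (\<lambda>t. w (time_change \<rho>' t))"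
    using min[OF admissible_time_change[OF \<rho>' w]] by simp
  also have "\<dots> = integral {0..1} (\<lambda>s. (norm (wderiv w s))\<^sup>2 / \<rho>' s) * integral {0..1} (\<lambda>s. \<rho>' s * V (w s))"
    by (rule Mfun_time_change[OF \<rho>' w_H1 continuous_on_potential_admissible[OF V w]])
  also have "\<dots> = integral {0..1} (\<lambda>s. c * ((norm (wderiv w s))\<^sup>2 / \<rho> s))
      * integral {0..1} (\<lambda>s. (\<rho> s * V (w s)) / c)"
    by (intro arg_cong2[where f = "(*)"] integral_cong) (simp_all add: \<rho>'_def)
  also have "\<dots> = integral {0..1} (\<lambda>s. (norm (wderiv w s))\<^sup>2 / \<rho> s) * integral {0..1} (\<lambda>s. \<rho> s * V (w s))"
    using c by (simp only: integral_mult_right integral_divide) simp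
  finally show ?thesis .
qed

section \<open>Optimising the weight\<close>

lemma continuous_approximation_bounded_measurable:
  fixes \<rho> :: "'a::euclidean_space \<Rightarrow> real"
  assumes S: "S \<in> sets lebesgue" and \<rho>: "\<rho> \<in> borel_measurable (lebesgue_on S)"
    and bounds: "\<And>x. x \<in> S \<Longrightarrow> a \<le> \<rho> x \<and> \<rho> x \<le> b"
  obtains N r where "negligible N" "\<And>k. continuous_on UNIV (r k)"
    "\<And>k x. a \<le> r k x \<and> r k x \<le> max a b" "\<And>x. x \<in> S - N \<Longrightarrow> (\<lambda>k. r k x) \<longlonglongrightarrow> \<rho> x"
proof -
  obtain N r where N: "negligible N" and r: "\<And>k. continuous_on UNIV (r k)"
    and lim: "\<And>x. x \<notin> N \<Longrightarrow> (\<lambda>k. r k x) \<longlonglongrightarrow> (if x \<in> S then \<rho> x else 0)"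
    using \<rho> unfolding measurable_on_iff_borel_measurable[OF S, symmetric] measurable_on_def by blast
  show ?thesis
  proof (rule that[of N "\<lambda>k x. max a (min (r k x) b)"])
    show "negligible N"
      by (fact N)
    show "continuous_on UNIV (\<lambda>x. max a (min (r k x) b))" for k
      using r[of k] by (intro continuous_intros)
    show "a \<le> max a (min (r k x) b) \<and> max a (min (r k x) b) \<le> max a b" for k x
      by auto
    show "(\<lambda>k. max a (min (r k x) b)) \<longlonglongrightarrow> \<rho> x" if "x \<in> S - N" for x
    proof -
      have "(\<lambda>k. max a (min (r k x) b)) \<longlonglongrightarrow> max a (min (\<rho> x) b)"
        using lim[of x] that by (intro tendsto_intros) auto
      then show ?thesis
        using bounds[of x] that by (simp add: max_absorb2 min_absorb1)
    qed
  qed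
qed

lemma weighted_bound_measurable_weight:
  fixes n v \<rho> :: "'a::euclidean_space \<Rightarrow> real"
  assumes S: "S \<in> sets lebesgue"
    and n2: "(\<lambda>s. (n s)\<^sup>2) integrable_on S"
    and v: "v integrable_on S" and v_nonneg: "\<And>s. s \<in> S \<Longrightarrow> 0 \<le> v s"
    and \<rho>: "\<rho> \<in> borel_measurable (lebesgue_on S)"
    and e: "0 < e" and bounds: "\<And>s. s \<in> S \<Longrightarrow> e \<le> \<rho> s \<and> \<rho> s \<le> b"
    and bound: "\<And>r. continuous_on S r \<Longrightarrow> (\<And>s. s \<in> S \<Longrightarrow> 0 < r s) \<Longrightarrow>
      X \<le> integral S (\<lambda>s. (n s)\<^sup>2 / r s) * integral S (\<lambda>s. r s * v s)"
  shows "X \<le> integral S (\<lambda>s. (n s)\<^sup>2 / \<rho> s) * integral S (\<lambda>s. \<rho> s * v s)"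
proof -
  obtain N r where N: "negligible N" and r_cont: "\<And>k. continuous_on UNIV (r k)"
    and r_bounds: "\<And>k x. e \<le> r k x \<and> r k x \<le> max e b"
    and r_lim: "\<And>x. x \<in> S - N \<Longrightarrow> (\<lambda>k. r k x) \<longlonglongrightarrow> \<rho> x"
    using continuous_approximation_bounded_measurable[OF S \<rho> bounds] by blast
  have r_pos: "0 < r k x" for k x
    using e r_bounds[of k x] by linarith
  have r_cont_S: "continuous_on S (r k)" for k
    using continuous_on_subset[OF r_cont subset_UNIV] .
  have kinetic: "(\<lambda>k. integral S (\<lambda>s. 1 / r k s * (n s)\<^sup>2)) \<longlonglongrightarrow> integral S (\<lambda>s. 1 / \<rho> s * (n s)\<^sup>2)"
  proof (rule tendsto_integral_mult_bounded_continuous[OF S _ _ _ N])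
    show "(\<lambda>s. (n s)\<^sup>2) absolutely_integrable_on S"
      using n2 by (rule nonnegative_absolutely_integrable_1) simp
    show "continuous_on S (\<lambda>s. 1 / r k s)" for k
      using r_cont_S[of k] r_pos[of k] by (intro continuous_intros) (auto simp: less_imp_neq[symmetric])
    show "\<bar>1 / r k s\<bar> \<le> 1 / e" for k s
      using r_bounds[of k s] r_pos[of k s] e by (auto simp: abs_of_pos intro: divide_left_mono)
    show "(\<lambda>k. 1 / r k s) \<longlonglongrightarrow> 1 / \<rho> s" if "s \<in> S - N" for s
      using r_lim[OF that] bounds[of s] that e by (intro tendsto_intros) auto
  qed
  have "v absolutely_integrable_on S"
    using v v_nonneg by (rule nonnegative_absolutely_integrable_1)
  then have potential: "(\<lambda>k. integral S (\<lambda>s. r k s * v s)) \<longlonglongrightarrow> integral S (\<lambda>s. \<rho> s * v s)"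
    using r_bounds r_pos
    by (intro tendsto_integral_mult_bounded_continuous[OF S _ r_cont_S _ N r_lim, where B = "max e b"])
      (auto simp: abs_of_pos)
  have "(\<lambda>k. integral S (\<lambda>s. 1 / r k s * (n s)\<^sup>2) * integral S (\<lambda>s. r k s * v s))
      \<longlonglongrightarrow> integral S (\<lambda>s. 1 / \<rho> s * (n s)\<^sup>2) * integral S (\<lambda>s. \<rho> s * v s)"
    using kinetic potential by (rule tendsto_mult)
  then have "X \<le> integral S (\<lambda>s. 1 / \<rho> s * (n s)\<^sup>2) * integral S (\<lambda>s. \<rho> s * v s)"
    by (rule LIMSEQ_le_const) (use bound[OF r_cont_S r_pos] in simp)
  then show ?thesis
    by simp
qed

(* For n = |w'| and q = sqrt (V w), the weight n / q makes Cauchy-Schwarz an equality; clamping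
   it to [e, 1/e] costs at most e times the unweighted integrands. *)
lemma clamped_ratio_bounds:
  fixes n q e :: real
  assumes n: "0 \<le> n" and q: "0 < q" and e: "0 < e" "e \<le> 1"
  shows "n\<^sup>2 / max e (min (n / q) (1 / e)) \<le> n * q + e * n\<^sup>2"
    and "q\<^sup>2 * max e (min (n / q) (1 / e)) \<le> n * q + e * q\<^sup>2"
proof -
  define d where "d = max e (min (n / q) (1 / e))"
  have d: "0 < d"
    using e unfolding d_def by simp
  have "n\<^sup>2 / d \<le> n * q + e * n\<^sup>2"
  proof (cases "n / q \<le> 1 / e")
    case True
    show ?thesis
    proof (cases "n = 0")
      case False
      then have "0 < n"
        using n by simp
      moreover have "n / q \<le> d"
        using True unfolding d_def by simp
      ultimately have "n\<^sup>2 / d \<le> n\<^sup>2 / (n / q)"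
        using q d by (intro divide_left_mono) auto
      also have "\<dots> = n * q"
        using \<open>0 < n\<close> q by (simp add: power2_eq_square field_simps)
      finally show ?thesis
        using e n by (simp add: add_increasing2)
    qed simp
  next
    case False
    then have "1 / e \<le> d"
      unfolding d_def by simp
    then have "n\<^sup>2 / d \<le> n\<^sup>2 / (1 / e)"
      using e d by (intro divide_left_mono) auto
    then have "n\<^sup>2 / d \<le> e * n\<^sup>2"
      by (simp add: mult.commute)
    moreover have "0 \<le> n * q"
      using n q by simp
    ultimately show ?thesis
      by linarith
  qed
  then show "n\<^sup>2 / max e (min (n / q) (1 / e)) \<le> n * q + e * n\<^sup>2"
    unfolding d_def .
  have "d \<le> n / q + e"
    using n q e unfolding d_def by (auto simp: max_def min_def)
  then have "q\<^sup>2 * d \<le> q\<^sup>2 * (n / q + e)"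
    by (intro mult_left_mono) auto
  also have "\<dots> = n * q + e * q\<^sup>2"
    using q by (simp add: power2_eq_square field_simps)
  finally show "q\<^sup>2 * max e (min (n / q) (1 / e)) \<le> n * q + e * q\<^sup>2"
    unfolding d_def .
qed

context
  fixes S :: "'a::euclidean_space set" and n v :: "'a \<Rightarrow> real" and X :: real
  assumes S: "S \<in> sets lebesgue"
    and n_meas: "n \<in> borel_measurable (lebesgue_on S)" and n_nonneg: "\<And>s. s \<in> S \<Longrightarrow> 0 \<le> n s"
    and n2: "(\<lambda>s. (n s)\<^sup>2) integrable_on S"
    and v: "v integrable_on S" and v_pos: "\<And>s. s \<in> S \<Longrightarrow> 0 < v s"
    and nv: "(\<lambda>s. n s * sqrt (v s)) integrable_on S"
    and bound: "\<And>r. continuous_on S r \<Longrightarrow> (\<And>s. s \<in> S \<Longrightarrow> 0 < r s) \<Longrightarrow>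
      X \<le> integral S (\<lambda>s. (n s)\<^sup>2 / r s) * integral S (\<lambda>s. r s * v s)"
begin

lemma weighted_bound_clamped_ratio:
  assumes e: "0 < e" "e \<le> 1"
  shows "X \<le> (integral S (\<lambda>s. n s * sqrt (v s)) + e * integral S (\<lambda>s. (n s)\<^sup>2))
    * (integral S (\<lambda>s. n s * sqrt (v s)) + e * integral S v)"
proof -
  define \<rho> where "\<rho> s = max e (min (n s / sqrt (v s)) (1 / e))" for s
  have v_meas: "v \<in> borel_measurable (lebesgue_on S)"
    using v by (rule integrable_imp_measurable)
  have \<rho>_meas: "\<rho> \<in> borel_measurable (lebesgue_on S)"
    unfolding \<rho>_def using n_meas v_meas by measurable
  have \<rho>_bounds: "e \<le> \<rho> s \<and> \<rho> s \<le> 1 / e" for s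
    using e mult_le_one[of e e] unfolding \<rho>_def by (auto simp: field_simps)
  have kinetic_int: "(\<lambda>s. (n s)\<^sup>2 / \<rho> s) integrable_on S"
  proof (rule measurable_bounded_by_integrable_imp_integrable_real[OF _ integrable_on_divide[OF n2] _ S])
    show "(\<lambda>s. (n s)\<^sup>2 / \<rho> s) \<in> borel_measurable (lebesgue_on S)"
      using n_meas \<rho>_meas by measurable
    show "\<bar>(n s)\<^sup>2 / \<rho> s\<bar> \<le> (n s)\<^sup>2 / e" for s
      using \<rho>_bounds[of s] e by (simp add: abs_of_pos divide_left_mono)
  qed
  have potential_nonneg: "0 \<le> \<rho> s * v s" if "s \<in> S" for s
    using \<rho>_bounds[of s] e v_pos[OF that] by simp
  have potential_int: "(\<lambda>s. \<rho> s * v s) integrable_on S"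
  proof (rule measurable_bounded_by_integrable_imp_integrable_real[OF _ integrable_on_mult_left[OF v] _ S])
    show "(\<lambda>s. \<rho> s * v s) \<in> borel_measurable (lebesgue_on S)"
      using \<rho>_meas v_meas by measurable
    show "\<bar>\<rho> s * v s\<bar> \<le> v s * (1 / e)" if "s \<in> S" for s
      using mult_right_mono[of "\<rho> s" "1 / e" "v s"] \<rho>_bounds[of s] v_pos[OF that] potential_nonneg[OF that]
      by (simp add: mult.commute)
  qed
  have "X \<le> integral S (\<lambda>s. (n s)\<^sup>2 / \<rho> s) * integral S (\<lambda>s. \<rho> s * v s)"
    using \<rho>_bounds v_pos
    by (intro weighted_bound_measurable_weight[OF S n2 v _ \<rho>_meas e(1)] bound) (auto simp: less_imp_le)
  also have "\<dots> \<le> (integral S (\<lambda>s. n s * sqrt (v s)) + e * integral S (\<lambda>s. (n s)\<^sup>2))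
    * (integral S (\<lambda>s. n s * sqrt (v s)) + e * integral S v)"
  proof (rule mult_mono)
    have "(n s)\<^sup>2 / \<rho> s \<le> n s * sqrt (v s) + e * (n s)\<^sup>2" if "s \<in> S" for s
      unfolding \<rho>_def using clamped_ratio_bounds(1)[where q = "sqrt (v s)", OF n_nonneg[OF that] _ e]
        v_pos[OF that] by simp
    then show "integral S (\<lambda>s. (n s)\<^sup>2 / \<rho> s) \<le> integral S (\<lambda>s. n s * sqrt (v s)) + e * integral S (\<lambda>s. (n s)\<^sup>2)"
      by (rule integral_le_add_mult[OF kinetic_int nv n2])
    have "\<rho> s * v s \<le> n s * sqrt (v s) + e * v s" if "s \<in> S" for s
      unfolding \<rho>_def using clamped_ratio_bounds(2)[where q = "sqrt (v s)", OF n_nonneg[OF that] _ e]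
        v_pos[OF that] by (simp add: mult.commute less_imp_le)
    then show "integral S (\<lambda>s. \<rho> s * v s) \<le> integral S (\<lambda>s. n s * sqrt (v s)) + e * integral S v"
      by (rule integral_le_add_mult[OF potential_int nv v])
    show "0 \<le> integral S (\<lambda>s. n s * sqrt (v s)) + e * integral S (\<lambda>s. (n s)\<^sup>2)"
      using nv n2 n_nonneg v_pos e
      by (intro add_nonneg_nonneg mult_nonneg_nonneg integral_nonneg) (auto simp: less_imp_le)
    show "0 \<le> integral S (\<lambda>s. \<rho> s * v s)"
      using potential_int potential_nonneg by (rule integral_nonneg)
  qed
  finally show ?thesis .
qed

lemma le_square_integral_if_weighted_bound: "X \<le> (integral S (\<lambda>s. n s * sqrt (v s)))\<^sup>2"
proof -
  define L G C where "L = integral S (\<lambda>s. n s * sqrt (v s))" and "G = integral S (\<lambda>s. (n s)\<^sup>2)"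
    and "C = integral S v"
  have "((\<lambda>e. (L + e * G) * (L + e * C)) \<longlongrightarrow> (L + 0 * G) * (L + 0 * C)) (at_right 0)"
    by (intro tendsto_intros)
  moreover have "\<forall>\<^sub>F e in at_right 0. X \<le> (L + e * G) * (L + e * C)"
    using eventually_at_right_real[OF zero_less_one]
    by (rule eventually_mono) (auto simp: L_def G_def C_def intro: weighted_bound_clamped_ratio)
  ultimately have "X \<le> (L + 0 * G) * (L + 0 * C)"
    by (rule tendsto_lowerbound) simp
  then show ?thesis
    by (simp add: L_def power2_eq_square)
qed

end

theorem propositionA3:
  fixes \<Omega> :: "(real ^ 'n) set" and p0 p1 :: "real ^ 'n" and V :: "real ^ 'n \<Rightarrow> real"
    and u :: "real \<Rightarrow> real ^ 'n"
  assumes "p0 \<in> \<Omega>" and "p1 \<in> \<Omega>"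
    and "continuous_on \<Omega> V" and "\<And>x. x \<in> \<Omega> \<Longrightarrow> V x > 0"
    and "u \<in> admissible \<Omega> p0 p1"
    and "\<And>w. w \<in> admissible \<Omega> p0 p1 \<Longrightarrow> Mfun V u \<le> Mfun V w"
  shows "\<forall>w \<in> admissible \<Omega> p0 p1. Lfun V u \<le> Lfun V w"
proof
  fix w
  assume w: "w \<in> admissible \<Omega> p0 p1"
  have w_H1: "H1 w" and V_pos: "\<And>t. t \<in> {0..1} \<Longrightarrow> 0 < V (w t)"
    using w assms(4) unfolding admissible_def by auto
  have V_cont: "continuous_on {0..1} (\<lambda>t. V (w t))"
    using assms(3) w by (rule continuous_on_potential_admissible)
  have g: "wderiv w absolutely_integrable_on {0..1}" "(\<lambda>t. (norm (wderiv w t))\<^sup>2) integrable_on {0..1}"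
    using H1_weak_deriv_wderiv[OF w_H1] unfolding H1_weak_deriv_def by blast+
  have "(Lfun V u)\<^sup>2 \<le> (Lfun V w)\<^sup>2"
    unfolding Lfun_def[of V w]
  proof (rule le_square_integral_if_weighted_bound[where S = "{0..1}"])
    have "wderiv w \<in> borel_measurable (lebesgue_on {0..1})"
      using g(1) by (rule absolutely_integrable_imp_borel_measurable) simp
    then show "(\<lambda>t. norm (wderiv w t)) \<in> borel_measurable (lebesgue_on {0..1})"
      by measurable
    show "(\<lambda>t. norm (wderiv w t) * sqrt (V (w t))) integrable_on {0..1}"
      using absolutely_integrable_Lfun_integrand[OF w_H1 V_cont] set_lebesgue_integral_eq_integral(1) by blast
    show "(Lfun V u)\<^sup>2 \<le> integral {0..1} (\<lambda>s. (norm (wderiv w s))\<^sup>2 / r s) * integral {0..1} (\<lambda>s. r s * V (w s))"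
      if "continuous_on {0..1} r" "\<And>s. s \<in> {0..1} \<Longrightarrow> 0 < r s" for r
      using assms(3-6) w that by (rule square_Lfun_le_weighted_energy)
  qed (use g V_cont V_pos in \<open>auto intro: integrable_continuous_interval\<close>)
  moreover have "0 \<le> Lfun V w"
    using w_H1 V_cont V_pos by (rule Lfun_nonneg)
  ultimately show "Lfun V u \<le> Lfun V w"
    by (rule power2_le_imp_le)
qed

end
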